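(* If $\mathcal C$ denotes the epireflective subcategory of $\mathbf{Top}$ defined by any one of the separation axioms $T_0$, $T_1$, $T_2$, functionally Hausdorff, then $\mathrm{r}_{\mathcal C}$ preserves arbitrary products of semitopological Mal'tsev spaces: for every family $\{X_i\}$ of semitopological Mal'tsev spaces, the canonical map $\mu_{\mathcal C}\colon\mathrm{r}_{\mathcal C}\prod X_i\to\prod\mathrm{r}_{\mathcal C}X_i$ is a homeomorphism.
   Context: For an epireflective subcategory $\mathcal C$ of $\mathbf{Top}$, $\mathrm{r}_{\mathcal C}X$ is the reflection of $X$ in $\mathcal C$ with universal continuous surjection $\mathrm{r}_{(X,\mathcal C)}$, and $\mu_{\mathcal C}$ is the unique continuous map with $\pi_j\circ\mu_{\mathcal C}=\mathrm{r}_{\mathcal C}(\pi_{X_j})$ for all $j$. A Mal'tsev operation on $X$ is a map $\Phi\colon X^3\to X$ with $\Phi(x,x,y)=\Phi(y,x,x)=y$; a semitopological Mal'tsev space is a space admitting a separately continuous Mal'tsev operation. A space is functionally Hausdorff if distinct points are separated by a real-valued continuous function. *)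

theory Defs
  imports "HOL-Analysis.Analysis"
begin

definition functionally_Hausdorff :: "'a topology \<Rightarrow> bool" where
  "functionally_Hausdorff X \<longleftrightarrow>
     (\<forall>x\<in>topspace X. \<forall>y\<in>topspace X. x \<noteq> y \<longrightarrow>
        (\<exists>f. continuous_map X euclideanreal f \<and> f x \<noteq> f y))"

datatype sep_axiom = ST0 | ST1 | ST2 | SFH

fun sep_holds :: "sep_axiom \<Rightarrow> 'a topology \<Rightarrow> bool" where
  "sep_holds ST0 X = t0_space X"
| "sep_holds ST1 X = t1_space X"
| "sep_holds ST2 X = Hausdorff_space X"
| "sep_holds SFH X = functionally_Hausdorff X"

definition semitopological_maltsev :: "'a topology \<Rightarrow> bool" where
  "semitopological_maltsev X \<longleftrightarrow>
     (\<exists>\<Phi> :: 'a \<Rightarrow> 'a \<Rightarrow> 'a \<Rightarrow> 'a.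
        (\<forall>x\<in>topspace X. \<forall>y\<in>topspace X. \<Phi> x x y = y \<and> \<Phi> y x x = y) \<and>
        (\<forall>b\<in>topspace X. \<forall>c\<in>topspace X. continuous_map X X (\<lambda>a. \<Phi> a b c)) \<and>
        (\<forall>a\<in>topspace X. \<forall>c\<in>topspace X. continuous_map X X (\<lambda>b. \<Phi> a b c)) \<and>
        (\<forall>a\<in>topspace X. \<forall>b\<in>topspace X. continuous_map X X (\<lambda>c. \<Phi> a b c)))"

text \<open>Test spaces range over
  topologies on the point type of X; this loses no generality since any continuous
  f: X \<rightarrow> Y factors through the subspace f(X) of Y (which satisfies s, the class being
  hereditary) and |f(X)| \<le> |X|.\<close>
definition is_reflection :: "sep_axiom \<Rightarrow> 'a topology \<Rightarrow> 'c topology \<Rightarrow> ('a \<Rightarrow> 'c) \<Rightarrow> bool" where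
  "is_reflection s X R r \<longleftrightarrow>
     sep_holds s R \<and> continuous_map X R r \<and> r ` topspace X = topspace R \<and>
     (\<forall>(Y :: 'a topology) f. sep_holds s Y \<and> continuous_map X Y f \<longrightarrow>
        (\<exists>g. continuous_map R Y g \<and> (\<forall>x\<in>topspace X. g (r x) = f x) \<and>
             (\<forall>g'. continuous_map R Y g' \<and> (\<forall>x\<in>topspace X. g' (r x) = f x) \<longrightarrow>
                   (\<forall>y\<in>topspace R. g' y = g y))))"

end

theory Submission
  imports Defs
begin

text \<open>The reflection map \<open>r : X \<rightarrow> r X\<close> is a quotient map, and when \<open>X\<close> carries a separately
  continuous Mal'tsev operation \<open>\<Phi>\<close> the \<open>r\<close>-saturation of an open set \<open>U\<close> is open: if \<open>r w = r u\<close>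
  with \<open>u \<in> U\<close>, then every \<open>c\<close> with \<open>\<Phi> c w u \<in> U\<close> satisfies \<open>r c = r (\<Phi> c w w) = r (\<Phi> c w u)\<close>.
  Hence \<open>r\<close> is open for Mal'tsev spaces.  For a product, the comparison map \<open>\<mu>\<close> is continuous by
  the universal property, surjective and open because \<open>\<Pi> r\<^sub>i = \<mu> \<circ> r\<close> is a product of open
  surjections.  It is injective: if \<open>r\<^sub>i (x i) = r\<^sub>i (y i)\<close> for all \<open>i\<close>, replacing finitely many
  coordinates of \<open>x\<close> by those of \<open>y\<close> does not change \<open>r x\<close>, and such points approximate \<open>y\<close>, so
  \<open>r x\<close> and \<open>r y\<close> lie in each other's closure and coincide by \<open>T\<^sub>0\<close>.\<close>

lemma t0_space_injective_preimage:
  assumes Y: "t0_space Y" and f: "continuous_map X Y f" and inj: "inj_on f (topspace X)"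
  shows "t0_space X"
  unfolding t0_space_def
proof (intro ballI impI)
  fix x y assume xy: "x \<in> topspace X" "y \<in> topspace X" "x \<noteq> y"
  have "f x \<in> topspace Y" "f y \<in> topspace Y" "f x \<noteq> f y"
    using xy continuous_map_image_subset_topspace[OF f] inj_onD[OF inj] by auto
  then obtain U where "openin Y U" "f x \<notin> U \<longleftrightarrow> f y \<in> U"
    using Y unfolding t0_space_def by blast
  then show "\<exists>U. openin X U \<and> (x \<notin> U \<longleftrightarrow> y \<in> U)"
    using xy openin_continuous_map_preimage[OF f] by (intro exI[of _ "{x \<in> topspace X. f x \<in> U}"]) auto
qed

lemma t1_space_injective_preimage:
  assumes Y: "t1_space Y" and f: "continuous_map X Y f" and inj: "inj_on f (topspace X)"
  shows "t1_space X"
  unfolding t1_space_def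
proof (intro ballI impI)
  fix x y assume xy: "x \<in> topspace X" "y \<in> topspace X" "x \<noteq> y"
  have "f x \<in> topspace Y" "f y \<in> topspace Y" "f x \<noteq> f y"
    using xy continuous_map_image_subset_topspace[OF f] inj_onD[OF inj] by auto
  then obtain U where "openin Y U" "f x \<in> U" "f y \<notin> U"
    using Y unfolding t1_space_def by blast
  then show "\<exists>U. openin X U \<and> x \<in> U \<and> y \<notin> U"
    using xy openin_continuous_map_preimage[OF f] by (intro exI[of _ "{x \<in> topspace X. f x \<in> U}"]) auto
qed

lemma functionally_Hausdorff_injective_preimage:
  assumes Y: "functionally_Hausdorff Y" and f: "continuous_map X Y f" and inj: "inj_on f (topspace X)"
  shows "functionally_Hausdorff X"
  unfolding functionally_Hausdorff_def
proof (intro ballI impI)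
  fix x y assume xy: "x \<in> topspace X" "y \<in> topspace X" "x \<noteq> y"
  have "f x \<in> topspace Y" "f y \<in> topspace Y" "f x \<noteq> f y"
    using xy continuous_map_image_subset_topspace[OF f] inj_onD[OF inj] by auto
  then obtain h where "continuous_map Y euclideanreal h" "h (f x) \<noteq> h (f y)"
    using Y unfolding functionally_Hausdorff_def by blast
  then show "\<exists>h. continuous_map X euclideanreal h \<and> h x \<noteq> h y"
    using continuous_map_compose[OF f] by (intro exI[of _ "h \<circ> f"]) auto
qed

lemma sep_holds_injective_preimage:
  assumes "sep_holds s Y" "continuous_map X Y f" "inj_on f (topspace X)"
  shows "sep_holds s X"
  using assms(1) t0_space_injective_preimage[OF _ assms(2,3)] t1_space_injective_preimage[OF _ assms(2,3)]
    Hausdorff_space_injective_preimage[OF _ assms(2,3)]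
    functionally_Hausdorff_injective_preimage[OF _ assms(2,3)]
  by (cases s) simp_all

lemma functionally_Hausdorff_imp_Hausdorff_space:
  assumes "functionally_Hausdorff X"
  shows "Hausdorff_space X"
  unfolding Hausdorff_space_def
proof clarify
  fix x y assume xy: "x \<in> topspace X" "y \<in> topspace X" "x \<noteq> y"
  then obtain f where f: "continuous_map X euclideanreal f" "f x \<noteq> f y"
    using assms unfolding functionally_Hausdorff_def by blast
  obtain U V where UV: "open U" "open V" "f x \<in> U" "f y \<in> V" "U \<inter> V = {}"
    using hausdorff[OF f(2)] by blast
  show "\<exists>U V. openin X U \<and> openin X V \<and> x \<in> U \<and> y \<in> V \<and> disjnt U V"
  proof (intro exI conjI)
    show "openin X {x \<in> topspace X. f x \<in> U}" "openin X {x \<in> topspace X. f x \<in> V}"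
      using UV openin_continuous_map_preimage[OF f(1)] by simp_all
    show "disjnt {x \<in> topspace X. f x \<in> U} {x \<in> topspace X. f x \<in> V}"
      using UV(5) by (auto simp: disjnt_def)
  qed (use xy UV in auto)
qed

lemma sep_holds_imp_t0_space: "sep_holds s X \<Longrightarrow> t0_space X"
  by (cases s) (auto intro: t1_imp_t0_space Hausdorff_imp_t0_space
      functionally_Hausdorff_imp_Hausdorff_space)

lemma functionally_Hausdorff_product_topology:
  assumes "\<And>i. i \<in> I \<Longrightarrow> functionally_Hausdorff (X i)"
  shows "functionally_Hausdorff (product_topology X I)"
  unfolding functionally_Hausdorff_def
proof (intro ballI impI)
  fix x y assume x: "x \<in> topspace (product_topology X I)" and y: "y \<in> topspace (product_topology X I)"
    and "x \<noteq> y"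
  then obtain j where j: "j \<in> I" "x j \<noteq> y j"
    by (metis PiE_ext topspace_product_topology)
  moreover have "x j \<in> topspace (X j)" "y j \<in> topspace (X j)"
    using x y j by (auto simp: PiE_iff)
  ultimately obtain h where h: "continuous_map (X j) euclideanreal h" "h (x j) \<noteq> h (y j)"
    using assms unfolding functionally_Hausdorff_def by blast
  then show "\<exists>h. continuous_map (product_topology X I) euclideanreal h \<and> h x \<noteq> h y"
    using continuous_map_compose[OF continuous_map_product_projection[OF j(1), of X] h(1)]
    by (intro exI[of _ "h \<circ> (\<lambda>z. z j)"]) simp
qed

lemma sep_holds_product_topology:
  assumes "\<And>i. i \<in> I \<Longrightarrow> sep_holds s (X i)"
  shows "sep_holds s (product_topology X I)"
proof (cases s)
  case ST0 then show ?thesis using assms by (metis sep_holds.simps(1) t0_space_product_topology)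
next
  case ST1 then show ?thesis using assms by (metis sep_holds.simps(2) t1_space_product_topology)
next
  case ST2 then show ?thesis using assms by (metis sep_holds.simps(3) Hausdorff_space_product_topology)
next
  case SFH then show ?thesis using assms by (metis sep_holds.simps(4) functionally_Hausdorff_product_topology)
qed

lemma is_reflectionD:
  assumes "is_reflection s X R r"
  shows "sep_holds s R" "continuous_map X R r" "r ` topspace X = topspace R"
  using assms unfolding is_reflection_def by blast+

lemma reflection_factor_same_type:
  fixes X Y :: "'a topology"
  assumes "is_reflection s X R r" "sep_holds s Y" "continuous_map X Y f"
  obtains g where "continuous_map R Y g" "\<And>x. x \<in> topspace X \<Longrightarrow> g (r x) = f x"
proof -
  have "\<forall>(Y :: 'a topology) f. sep_holds s Y \<and> continuous_map X Y f \<longrightarrow>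
          (\<exists>g. continuous_map R Y g \<and> (\<forall>x\<in>topspace X. g (r x) = f x))"
    using assms(1) unfolding is_reflection_def by blast
  then show thesis
    using assms(2,3) that by blast
qed

text \<open>The definition only quantifies over test spaces whose points have the type of those of \<open>X\<close>;
  a map into an arbitrary space is first corestricted to a copy of its image inside \<open>X\<close>.\<close>

lemma reflection_factor:
  fixes X :: "'a topology" and R :: "'c topology" and Y :: "'d topology"
  assumes R: "is_reflection s X R r" and Y: "sep_holds s Y" and f: "continuous_map X Y f"
  obtains g where "continuous_map R Y g" "\<And>x. x \<in> topspace X \<Longrightarrow> g (r x) = f x"
proof -
  define \<sigma> where "\<sigma> = (\<lambda>y. SOME x. x \<in> topspace X \<and> f x = y)"
  have \<sigma>: "\<sigma> (f x) \<in> topspace X" "f (\<sigma> (f x)) = f x" if "x \<in> topspace X" for x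
    using someI[of "\<lambda>x'. x' \<in> topspace X \<and> f x' = f x" x] that unfolding \<sigma>_def by auto
  define A where "A = \<sigma> ` f ` topspace X"
  define T where "T = pullback_topology A f Y"
  have "A \<subseteq> f -` topspace Y"
  proof
    fix a assume "a \<in> A"
    then obtain x where "x \<in> topspace X" "a = \<sigma> (f x)" unfolding A_def by blast
    then show "a \<in> f -` topspace Y"
      using \<sigma>(2) continuous_map_image_subset_topspace[OF f] by auto
  qed
  then have topT: "topspace T = A"
    unfolding T_def topspace_pullback_topology by blast
  have fT: "continuous_map T Y f"
    using continuous_map_pullback[OF continuous_map_id, of A f] unfolding T_def by simp
  have "inj_on f A"
  proof (rule inj_onI)
    fix a b assume "a \<in> A" "b \<in> A" and fab: "f a = f b"
    then obtain x y where "x \<in> topspace X" "a = \<sigma> (f x)" "y \<in> topspace X" "b = \<sigma> (f y)"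
      unfolding A_def by blast
    then show "a = b" using \<sigma>(2) fab by metis
  qed
  then have T: "sep_holds s T"
    using sep_holds_injective_preimage[OF Y fT] topT by simp
  have "continuous_map X Y (f \<circ> (\<sigma> \<circ> f))"
    using f by (rule continuous_map_eq) (simp add: \<sigma>)
  then have "continuous_map X T (\<sigma> \<circ> f)"
    unfolding T_def by (rule continuous_map_pullback') (auto simp: A_def)
  then obtain g where g: "continuous_map R T g" "\<And>x. x \<in> topspace X \<Longrightarrow> g (r x) = \<sigma> (f x)"
    using reflection_factor_same_type[OF R T] by (metis comp_apply)
  show thesis
  proof
    show "continuous_map R Y (f \<circ> g)"
      using g(1) fT by (rule continuous_map_compose)
    show "(f \<circ> g) (r x) = f x" if "x \<in> topspace X" for x
      using g(2) \<sigma> that by simp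
  qed
qed

lemma reflection_factor_respects:
  assumes "is_reflection s X R r" "sep_holds s Y" "continuous_map X Y f"
    and "a \<in> topspace X" "b \<in> topspace X" "r a = r b"
  shows "f a = f b"
proof -
  obtain g where "\<And>x. x \<in> topspace X \<Longrightarrow> g (r x) = f x"
    using reflection_factor[OF assms(1-3)] by blast
  then show ?thesis using assms(4-6) by metis
qed

text \<open>Enlarging the topology of \<open>R\<close> by the new open set \<open>W\<close> keeps the separation axiom and keeps \<open>r\<close>
  continuous, so the identity of \<open>R\<close> is continuous into the enlarged topology.\<close>

lemma reflection_quotient:
  assumes R: "is_reflection s X R r" and W: "W \<subseteq> topspace R"
    and open_preimage: "openin X {x \<in> topspace X. r x \<in> W}"
  shows "openin R W"
proof -
  note R' = is_reflectionD[OF R]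
  define T where "T = topology_generated_by (insert W {V. openin R V})"
  have topT: "topspace T = topspace R"
    unfolding T_def topology_generated_by_topspace using W by (auto simp: topspace_def)
  have "continuous_map T R id"
    unfolding continuous_map_def
  proof (intro conjI allI impI)
    show "id \<in> topspace T \<rightarrow> topspace R" using topT by auto
    fix V assume V: "openin R V"
    then have "{x \<in> topspace T. id x \<in> V} = V" using openin_subset topT by fastforce
    then show "openin T {x \<in> topspace T. id x \<in> V}"
      unfolding T_def using V by (simp add: topology_generated_by_Basis)
  qed
  then have T: "sep_holds s T"
    using sep_holds_injective_preimage[OF R'(1) _ inj_on_id] by blast
  have "continuous_map X T r"
    unfolding T_def
  proof (rule continuous_on_generated_topo)
    fix V assume "V \<in> insert W {V. openin R V}"
    then show "openin X (r -` V \<inter> topspace X)"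
      using open_preimage openin_continuous_map_preimage[OF R'(2)]
      by (auto simp: Int_commute Collect_conj_eq vimage_def)
  qed (use R'(3) in \<open>auto simp: topspace_def\<close>)
  then obtain g where g: "continuous_map R T g" "\<And>x. x \<in> topspace X \<Longrightarrow> g (r x) = r x"
    using reflection_factor[OF R T] by blast
  have "g y = y" if "y \<in> topspace R" for y
    using that R'(3) g(2) by force
  then have "{y \<in> topspace R. g y \<in> W} = W" using W by auto
  moreover have "openin T W" unfolding T_def by (simp add: topology_generated_by_Basis)
  ultimately show ?thesis
    using openin_continuous_map_preimage[OF g(1)] by metis
qed

lemma maltsev_saturation_openin:
  assumes "semitopological_maltsev X" and U: "openin X U"
    and respects: "\<And>h a b. \<lbrakk>continuous_map X X h; a \<in> topspace X; b \<in> topspace X; q a = q b\<rbrakk>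
                     \<Longrightarrow> q (h a) = q (h b)"
  shows "openin X {w \<in> topspace X. \<exists>u\<in>U. q w = q u}" (is "openin X ?S")
proof -
  obtain \<Phi> :: "'a \<Rightarrow> 'a \<Rightarrow> 'a \<Rightarrow> 'a" where
    maltsev: "\<forall>x\<in>topspace X. \<forall>y\<in>topspace X. \<Phi> x x y = y \<and> \<Phi> y x x = y" and
    cont1: "\<forall>b\<in>topspace X. \<forall>c\<in>topspace X. continuous_map X X (\<lambda>a. \<Phi> a b c)" and
    cont3: "\<forall>a\<in>topspace X. \<forall>b\<in>topspace X. continuous_map X X (\<lambda>c. \<Phi> a b c)"
    using assms(1) unfolding semitopological_maltsev_def by blast
  show ?thesis
    unfolding openin_subopen[of X ?S]
  proof
    fix w assume "w \<in> ?S"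
    then obtain u where w: "w \<in> topspace X" and u: "u \<in> U" "q w = q u" by blast
    have ut: "u \<in> topspace X" using u U openin_subset by blast
    define N where "N = {c \<in> topspace X. \<Phi> c w u \<in> U}"
    have "openin X N"
      unfolding N_def using openin_continuous_map_preimage[OF cont1[rule_format, OF w ut] U] .
    moreover have "w \<in> N" unfolding N_def using maltsev w ut u by simp
    moreover have "N \<subseteq> ?S"
    proof
      fix c assume "c \<in> N"
      then have c: "c \<in> topspace X" "\<Phi> c w u \<in> U" unfolding N_def by auto
      have "q c = q (\<Phi> c w w)" using maltsev c(1) w by simp
      also have "\<dots> = q (\<Phi> c w u)" using respects[OF cont3[rule_format, OF c(1) w] w ut u(2)] .
      finally show "c \<in> ?S" using c by blast
    qed
    ultimately show "\<exists>T. openin X T \<and> w \<in> T \<and> T \<subseteq> ?S" by blast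
  qed
qed

lemma reflection_open_map_maltsev:
  assumes M: "semitopological_maltsev X" and R: "is_reflection s X R r"
  shows "open_map X R r"
  unfolding open_map_def
proof (intro allI impI)
  fix U assume U: "openin X U"
  note R' = is_reflectionD[OF R]
  have "openin X {w \<in> topspace X. \<exists>u\<in>U. r w = r u}"
  proof (rule maltsev_saturation_openin[OF M U])
    fix h a b assume h: "continuous_map X X h" and ab: "a \<in> topspace X" "b \<in> topspace X" "r a = r b"
    show "r (h a) = r (h b)"
      using reflection_factor_respects[OF R R'(1) continuous_map_compose[OF h R'(2)] ab] by simp
  qed
  moreover have "{w \<in> topspace X. \<exists>u\<in>U. r w = r u} = {x \<in> topspace X. r x \<in> r ` U}"
    by blast
  moreover have "r ` U \<subseteq> topspace R"
    using R'(3) openin_subset[OF U] by blast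
  ultimately show "openin R (r ` U)"
    using reflection_quotient[OF R] by metis
qed

lemma image_restrict_PiE:
  "(\<lambda>x. \<lambda>i\<in>I. f i (x i)) ` Pi\<^sub>E I W = Pi\<^sub>E I (\<lambda>i. f i ` W i)"
proof
  show "(\<lambda>x. \<lambda>i\<in>I. f i (x i)) ` Pi\<^sub>E I W \<subseteq> Pi\<^sub>E I (\<lambda>i. f i ` W i)"
    by (auto simp: PiE_iff)
  show "Pi\<^sub>E I (\<lambda>i. f i ` W i) \<subseteq> (\<lambda>x. \<lambda>i\<in>I. f i (x i)) ` Pi\<^sub>E I W"
  proof
    fix q assume q: "q \<in> Pi\<^sub>E I (\<lambda>i. f i ` W i)"
    define x where "x = (\<lambda>i\<in>I. SOME a. a \<in> W i \<and> f i a = q i)"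
    have "x i \<in> W i \<and> f i (x i) = q i" if "i \<in> I" for i
    proof -
      have "\<exists>a. a \<in> W i \<and> f i a = q i" using q that by (force simp: PiE_iff image_iff)
      then show ?thesis unfolding x_def using that by (simp add: someI_ex[of "\<lambda>a. a \<in> W i \<and> f i a = q i"])
    qed
    then have "x \<in> Pi\<^sub>E I W" and "(\<lambda>i\<in>I. f i (x i)) = q"
      using q by (auto simp: PiE_iff x_def fun_eq_iff extensional_def)
    then show "q \<in> (\<lambda>x. \<lambda>i\<in>I. f i (x i)) ` Pi\<^sub>E I W" by blast
  qed
qed

lemma continuous_map_product_map:
  assumes "\<And>i. i \<in> I \<Longrightarrow> continuous_map (X i) (Y i) (f i)"
  shows "continuous_map (product_topology X I) (product_topology Y I) (\<lambda>x. \<lambda>i\<in>I. f i (x i))"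
  unfolding continuous_map_componentwise
proof (intro conjI ballI)
  fix k assume k: "k \<in> I"
  show "continuous_map (product_topology X I) (Y k) (\<lambda>x. (\<lambda>i\<in>I. f i (x i)) k)"
    using continuous_map_compose[OF continuous_map_product_projection[OF k, of X] assms[OF k]] k
    by (simp add: o_def)
qed auto

lemma open_map_product_map:
  assumes open_f: "\<And>i. i \<in> I \<Longrightarrow> open_map (X i) (Y i) (f i)"
    and surj_f: "\<And>i. i \<in> I \<Longrightarrow> f i ` topspace (X i) = topspace (Y i)"
  shows "open_map (product_topology X I) (product_topology Y I) (\<lambda>x. \<lambda>i\<in>I. f i (x i))"
    (is "open_map _ _ ?p")
  unfolding open_map_def
proof (intro allI impI)
  fix U assume "openin (product_topology X I) U"
  then have U: "\<forall>x\<in>U. \<exists>W. finite {i \<in> I. W i \<noteq> topspace (X i)} \<and> (\<forall>i\<in>I. openin (X i) (W i)) \<and>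
                  x \<in> Pi\<^sub>E I W \<and> Pi\<^sub>E I W \<subseteq> U"
    unfolding openin_product_topology_alt .
  show "openin (product_topology Y I) (?p ` U)"
    unfolding openin_product_topology_alt
  proof
    fix q assume "q \<in> ?p ` U"
    then obtain x where x: "x \<in> U" "q = ?p x" by blast
    obtain W where W: "finite {i \<in> I. W i \<noteq> topspace (X i)}" "\<forall>i\<in>I. openin (X i) (W i)"
      "x \<in> Pi\<^sub>E I W" "Pi\<^sub>E I W \<subseteq> U"
      using U x(1) by blast
    show "\<exists>V. finite {i \<in> I. V i \<noteq> topspace (Y i)} \<and> (\<forall>i\<in>I. openin (Y i) (V i)) \<and>
              q \<in> Pi\<^sub>E I V \<and> Pi\<^sub>E I V \<subseteq> ?p ` U"
    proof (intro exI conjI ballI)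
      have "{i \<in> I. f i ` W i \<noteq> topspace (Y i)} \<subseteq> {i \<in> I. W i \<noteq> topspace (X i)}"
        using surj_f by blast
      then show "finite {i \<in> I. f i ` W i \<noteq> topspace (Y i)}"
        using W(1) by (rule finite_subset)
      show "openin (Y i) (f i ` W i)" if "i \<in> I" for i
        using open_f[OF that] W(2)[rule_format, OF that] unfolding open_map_def by blast
      show "q \<in> Pi\<^sub>E I (\<lambda>i. f i ` W i)"
        using W(3) image_restrict_PiE[of f I W] unfolding x(2) by blast
      show "Pi\<^sub>E I (\<lambda>i. f i ` W i) \<subseteq> ?p ` U"
        using W(4) unfolding image_restrict_PiE[of f I W, symmetric] by (rule image_mono)
    qed
  qed
qed

lemma continuous_map_product_update:
  assumes z: "z \<in> topspace (product_topology X I)" and j: "j \<in> I"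
  shows "continuous_map (X j) (product_topology X I) (\<lambda>a. z(j := a))"
  unfolding continuous_map_componentwise
proof (intro conjI ballI)
  show "(\<lambda>a. z(j := a)) ` topspace (X j) \<subseteq> extensional I"
    using z j by (auto simp: PiE_iff extensional_def)
  fix k assume k: "k \<in> I"
  have "z k \<in> topspace (X k)" using z k by (auto simp: PiE_iff)
  then show "continuous_map (X j) (X k) (\<lambda>a. (z(j := a)) k)"
    by (cases "k = j") simp_all
qed

lemma reflection_product_update:
  assumes R: "is_reflection s (product_topology X I) R r"
    and Rj: "is_reflection s (X j) Rj rj" and j: "j \<in> I"
    and z: "z \<in> topspace (product_topology X I)"
    and ab: "a \<in> topspace (X j)" "b \<in> topspace (X j)" "rj a = rj b"
  shows "r (z(j := a)) = r (z(j := b))"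
  using reflection_factor_respects[OF Rj is_reflectionD(1)[OF R]
      continuous_map_compose[OF continuous_map_product_update[OF z j] is_reflectionD(2)[OF R]] ab]
  by simp

context
  fixes s :: sep_axiom and X :: "'i \<Rightarrow> 'a topology" and I :: "'i set" and R :: "'b topology"
    and r :: "('i \<Rightarrow> 'a) \<Rightarrow> 'b" and Rs :: "'i \<Rightarrow> 'c topology" and rs :: "'i \<Rightarrow> 'a \<Rightarrow> 'c"
    and x y :: "'i \<Rightarrow> 'a"
  assumes R: "is_reflection s (product_topology X I) R r"
    and Ri: "\<And>i. i \<in> I \<Longrightarrow> is_reflection s (X i) (Rs i) (rs i)"
    and x: "x \<in> topspace (product_topology X I)" and y: "y \<in> topspace (product_topology X I)"
    and same_image: "\<And>j. j \<in> I \<Longrightarrow> rs j (x j) = rs j (y j)"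
begin

lemma reflection_product_finite_change:
  assumes "finite F" "F \<subseteq> I"
  shows "r (\<lambda>k. if k \<in> F then y k else x k) = r x"
  using assms
proof (induction F rule: finite_induct)
  case empty
  then show ?case by simp
next
  case (insert j F)
  define z where "z = (\<lambda>k. if k \<in> F then y k else x k)"
  have j: "j \<in> I" using insert.prems by blast
  have z: "z \<in> topspace (product_topology X I)"
    using x y unfolding z_def by (auto simp: PiE_iff extensional_def)
  have "(\<lambda>k. if k \<in> insert j F then y k else x k) = z(j := y j)"
    by (auto simp: z_def fun_eq_iff)
  moreover have "z(j := x j) = z"
    using insert.hyps(2) by (auto simp: z_def fun_eq_iff)
  moreover have "x j \<in> topspace (X j)" "y j \<in> topspace (X j)"
    using x y j by (auto simp: PiE_iff)
  ultimately have "r (\<lambda>k. if k \<in> insert j F then y k else x k) = r z"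
    using reflection_product_update[OF R Ri[OF j] j z, of "y j" "x j"] same_image[OF j] by simp
  also have "\<dots> = r x"
    using insert by (simp add: z_def)
  finally show ?case .
qed

text \<open>A basic neighbourhood of \<open>y\<close> restricts only finitely many coordinates, so it contains a point
  obtained from \<open>x\<close> by a finite change of coordinates.\<close>

lemma reflection_product_closure: "r y \<in> R closure_of {r x}"
  unfolding in_closure_of
proof (intro conjI allI impI)
  note R' = is_reflectionD[OF R]
  show "r y \<in> topspace R" using y R'(3) by blast
  fix T assume T: "r y \<in> T \<and> openin R T"
  then have "openin (product_topology X I) {w \<in> topspace (product_topology X I). r w \<in> T}"
    using openin_continuous_map_preimage[OF R'(2)] by blast
  moreover have "y \<in> {w \<in> topspace (product_topology X I). r w \<in> T}"
    using y T by blast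
  ultimately obtain U where U: "finite {i \<in> I. U i \<noteq> topspace (X i)}" "\<forall>i\<in>I. openin (X i) (U i)"
    "y \<in> Pi\<^sub>E I U" "Pi\<^sub>E I U \<subseteq> {w \<in> topspace (product_topology X I). r w \<in> T}"
    unfolding openin_product_topology_alt by blast
  define F where "F = {i \<in> I. U i \<noteq> topspace (X i)}"
  have "(\<lambda>k. if k \<in> F then y k else x k) \<in> Pi\<^sub>E I U"
    using U(3) x unfolding F_def by (auto simp: PiE_iff extensional_def)
  then have "r (\<lambda>k. if k \<in> F then y k else x k) \<in> T" using U(4) by blast
  then show "\<exists>w. w \<in> {r x} \<and> w \<in> T"
    using reflection_product_finite_change[of F] U(1) unfolding F_def by auto
qed

end

lemma reflection_product_eq:
  assumes R: "is_reflection s (product_topology X I) R r"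
    and Ri: "\<And>i. i \<in> I \<Longrightarrow> is_reflection s (X i) (Rs i) (rs i)"
    and x: "x \<in> topspace (product_topology X I)" and y: "y \<in> topspace (product_topology X I)"
    and same_image: "\<And>j. j \<in> I \<Longrightarrow> rs j (x j) = rs j (y j)"
  shows "r x = r y"
proof -
  note R' = is_reflectionD[OF R]
  have "r y \<in> R closure_of {r x}" "r x \<in> R closure_of {r y}"
    using reflection_product_closure[OF R Ri] x y same_image by metis+
  then have "R closure_of {r x} = R closure_of {r y}"
    by (intro subset_antisym closure_of_minimal) auto
  then show ?thesis
    using sep_holds_imp_t0_space[OF R'(1)] x y R'(3) unfolding t0_space_closure_of_sing by blast
qed

lemma reflection_product_comparison_inj:
  assumes R: "is_reflection s (product_topology X I) R r"
    and Ri: "\<And>i. i \<in> I \<Longrightarrow> is_reflection s (X i) (Rs i) (rs i)"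
    and \<mu>: "\<And>x. x \<in> topspace (product_topology X I) \<Longrightarrow> \<mu> (r x) = (\<lambda>j\<in>I. rs j (x j))"
  shows "inj_on \<mu> (topspace R)"
proof (rule inj_onI)
  fix a b assume "a \<in> topspace R" "b \<in> topspace R" and ab: "\<mu> a = \<mu> b"
  then obtain x y where x: "x \<in> topspace (product_topology X I)" "a = r x"
    and y: "y \<in> topspace (product_topology X I)" "b = r y"
    using is_reflectionD(3)[OF R] by (metis imageE)
  have "(\<lambda>j\<in>I. rs j (x j)) = (\<lambda>j\<in>I. rs j (y j))"
    using ab x y \<mu> by simp
  then have "rs j (x j) = rs j (y j)" if "j \<in> I" for j
    using that by (metis restrict_apply')
  then show "a = b"
    using reflection_product_eq[OF R Ri x(1) y(1)] x(2) y(2) by blast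
qed

theorem corollary4p10:
  fixes s :: sep_axiom
    and Xs :: "'i \<Rightarrow> 'a topology" and I :: "'i set"
    and R :: "'b topology" and r :: "('i \<Rightarrow> 'a) \<Rightarrow> 'b"
    and Rs :: "'i \<Rightarrow> 'c topology" and rs :: "'i \<Rightarrow> 'a \<Rightarrow> 'c"
  assumes "\<forall>i\<in>I. semitopological_maltsev (Xs i)"
    and "is_reflection s (product_topology Xs I) R r"
    and "\<forall>i\<in>I. is_reflection s (Xs i) (Rs i) (rs i)"
  shows "\<exists>\<mu>. continuous_map R (product_topology Rs I) \<mu> \<and>
             (\<forall>x\<in>topspace (product_topology Xs I). \<mu> (r x) = (\<lambda>j\<in>I. rs j (x j))) \<and>
             homeomorphic_map R (product_topology Rs I) \<mu>"
proof -
  let ?P = "product_topology Xs I" and ?Q = "product_topology Rs I"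
  define p where "p = (\<lambda>x. \<lambda>j\<in>I. rs j (x j))"
  note R = assms(2) and R' = is_reflectionD[OF assms(2)]
  have Ri: "\<And>i. i \<in> I \<Longrightarrow> is_reflection s (Xs i) (Rs i) (rs i)" using assms(3) by blast
  note Ri' = is_reflectionD[OF Ri]
  have "sep_holds s ?Q" by (rule sep_holds_product_topology) (rule Ri'(1))
  moreover have "continuous_map ?P ?Q p"
    unfolding p_def by (rule continuous_map_product_map) (rule Ri'(2))
  ultimately obtain \<mu> where \<mu>: "continuous_map R ?Q \<mu>" "\<And>x. x \<in> topspace ?P \<Longrightarrow> \<mu> (r x) = p x"
    by (rule reflection_factor[OF R]) blast
  have "open_map ?P ?Q p"
    unfolding p_def
    by (rule open_map_product_map) (use reflection_open_map_maltsev assms(1) Ri Ri'(3) in blast)+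
  then have "open_map ?P ?Q (\<mu> \<circ> r)" by (rule open_map_eq) (simp add: \<mu>(2))
  then have "open_map R ?Q \<mu>" by (rule open_map_from_composition_left[OF _ R'(2,3)])
  moreover have "\<mu> ` topspace R = p ` topspace ?P"
    unfolding R'(3)[symmetric] image_image using \<mu>(2) by (rule image_cong[OF refl])
  moreover have "p ` topspace ?P = topspace ?Q"
    unfolding p_def topspace_product_topology image_restrict_PiE using Ri'(3) by (rule PiE_cong)
  moreover have "inj_on \<mu> (topspace R)"
    using reflection_product_comparison_inj[OF R Ri] \<mu>(2) unfolding p_def by blast
  ultimately have "homeomorphic_map R ?Q \<mu>"
    using bijective_open_imp_homeomorphic_map[OF \<mu>(1)] by simp
  then show ?thesis
    using \<mu> unfolding p_def by blast
qed

end
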